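(* For every $n\ge1$ and every $\pi\in S_n$, $\pi$ is $321$-avoiding if and only if $\Phi_4(\pi)$ is a parallelogram polyomino.
   Context: Cells are unit squares $[i,i+1]\times[j,j+1]$ with integer $i,j$; a polyomino is a finite edge-connected set of cells, up to translation. A directed polyomino has a distinguished cell (the source) such that every cell can be reached from the source by a path of cells moving only North or East inside the polyomino. It is column-convex if each column is connected. The (directed) height is the number of distinct diagonal lines $x+y=\text{const}$ passing through centers of its cells. A deco polyomino is a directed column-convex polyomino whose height is attained only in its last (rightmost) column; $D_n$ denotes those of height $n$. Every deco polyomino of height $n$ is built uniquely by $n$ steps from the empty polyomino; at step $j$ one performs either an elevation (add a cell at the bottom of the leftmost column; step 1 is always an elevation) or a column pasting (add a new column of $k$ cells, $1\le k\le j-1$, to the left of the current polyomino so that the bottoms of the first two columns lie at the same level). The bijection $\Phi_4:S_n\to D_n$ is defined through its inverse, recursively: the height-1 polyomino maps to the permutation $1$; if $\delta\in D_n$ arises from $\delta'\in D_{n-1}$ and $\Phi_4^{-1}(\delta')=\pi_1\cdots\pi_{n-1}$, then $\Phi_4^{-1}(\delta)=\pi_1\cdots\pi_{n-1}\,n$ if the last step is an elevation, and $\Phi_4^{-1}(\delta)=\pi_1\cdots\pi_{n-1-k}\,n\,\pi_{n-k}\cdots\pi_{n-1}$ if the last step pastes a column of length $k$. A permutation is $321$-avoiding if there are no indices $i<j<k$ with $\pi_i>\pi_j>\pi_k$. A parallelogram polyomino is a polyomino bounded by two lattice paths with steps $(1,0)$ and $(0,1)$ which intersect only at their common origin and common endpoint.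 *)

theory Defs
  imports Main
begin

(* Cells: the cell (i,j) :: int \<times> int is the unit square [i,i+1] \<times> [j,j+1].
   A polyomino is represented by its set of cells; "up to translation" is handled
   by choosing a representative (constructions) or by existential quantification
   over the position (parallelogram property). *)

type_synonym cell = "int \<times> int"

datatype deco_step = Elev | Paste nat

(* step number j+1 (0-indexed position j): pasting k cells requires 1 \<le> k \<le> (j+1)-1.
   In particular the first step is necessarily an elevation. *)
definition valid_deco_steps :: "deco_step list \<Rightarrow> bool" where
  "valid_deco_steps s \<longleftrightarrow>
     (\<forall>j < length s. case s ! j of Elev \<Rightarrow> True | Paste k \<Rightarrow> 1 \<le> k \<and> k \<le> j)"

definition shift_cells :: "int \<Rightarrow> int \<Rightarrow> cell set \<Rightarrow> cell set" where
  "shift_cells a b P = (\<lambda>(x,y). (x + a, y + b)) ` P"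

(* Representative normalised so that the source (bottom cell of the leftmost column)
   is the cell (0,0).
   Elevation: add a cell at the bottom of the leftmost column (then translate up by 1). *)
fun apply_deco_step :: "cell set \<Rightarrow> deco_step \<Rightarrow> cell set" where
  "apply_deco_step P Elev = insert (0,0) (shift_cells 0 1 P)"
| "apply_deco_step P (Paste k) = {(0, int j) | j. j < k} \<union> shift_cells 1 0 P"

definition build_deco :: "deco_step list \<Rightarrow> cell set" where
  "build_deco s = foldl apply_deco_step {} s"

(* Phi_4^{-1} along the construction: at step n, insert n at the end (elevation)
   or so that exactly k entries follow it (pasting a column of length k). *)
fun perm_step :: "nat list \<Rightarrow> deco_step \<Rightarrow> nat list" where
  "perm_step p Elev = p @ [length p + 1]"
| "perm_step p (Paste k) = take (length p - k) p @ [length p + 1] @ drop (length p - k) p"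

definition perm_of_steps :: "deco_step list \<Rightarrow> nat list" where
  "perm_of_steps s = foldl perm_step [] s"

definition Phi4 :: "nat list \<Rightarrow> cell set" where
  "Phi4 \<pi> = build_deco (THE s. valid_deco_steps s \<and> perm_of_steps s = \<pi>)"

definition avoids321 :: "nat list \<Rightarrow> bool" where
  "avoids321 \<pi> \<longleftrightarrow>
     \<not> (\<exists>i j k. i < j \<and> j < k \<and> k < length \<pi> \<and> \<pi> ! i > \<pi> ! j \<and> \<pi> ! j > \<pi> ! k)"

datatype lstep = StE | StN   (* (1,0) and (0,1) *)

fun path_verts :: "int \<times> int \<Rightarrow> lstep list \<Rightarrow> (int \<times> int) list" where
  "path_verts p [] = [p]"
| "path_verts (x,y) (StE # ps) = (x,y) # path_verts (x+1,y) ps"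
| "path_verts (x,y) (StN # ps) = (x,y) # path_verts (x,y+1) ps"

(* left endpoints of the horizontal unit edges of the path *)
fun east_edges :: "int \<times> int \<Rightarrow> lstep list \<Rightarrow> (int \<times> int) set" where
  "east_edges p [] = {}"
| "east_edges (x,y) (StE # ps) = insert (x,y) (east_edges (x+1,y) ps)"
| "east_edges (x,y) (StN # ps) = east_edges (x,y+1) ps"

(* P is bounded by an upper path U and a lower path L with common origin q and
   common endpoint, meeting only there: the cells of P are exactly the cells (i,j)
   lying in a column i above the horizontal edge of L and below that of U. *)
definition parallelogram_polyomino :: "cell set \<Rightarrow> bool" where
  "parallelogram_polyomino P \<longleftrightarrow>
     (\<exists>q U L.
        last (path_verts q U) = last (path_verts q L) \<and>
        set (path_verts q U) \<inter> set (path_verts q L) = {q, last (path_verts q U)} \<and>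
        P = {(i,j). \<exists>yl yu. (i,yl) \<in> east_edges q L \<and> (i,yu) \<in> east_edges q U
                           \<and> yl \<le> j \<and> j < yu})"

end

theory Submission
  imports Defs
begin

text \<open>
A deco polyomino is recorded by its list of columns, each column given by the heights of its
bottom and its top. Elevation lengthens the first column; pasting a column of k cells puts a new
first column of height k in front. On the permutation side the same step appends n, respectively
inserts n just before the last k entries. As long as the permutation avoids 321, the height of the
first column is exactly the length of the longest increasing suffix of the permutation, so inserting
n before the last k entries creates a 321 precisely when k exceeds the height of the current first
column. Hence the permutation avoids 321 iff the column tops weakly increase from left to right.
Since the bottoms of a deco polyomino never decrease and each column starts below the top of its
left neighbour, weakly increasing tops are exactly what is needed for the upper and lower boundary
paths to form a parallelogram polyomino.
\<close>

definition valid_deco_step :: "nat \<Rightarrow> deco_step \<Rightarrow> bool" where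
  "valid_deco_step l x \<longleftrightarrow> (case x of Elev \<Rightarrow> True | Paste k \<Rightarrow> 1 \<le> k \<and> k \<le> l)"

definition entries_after :: "deco_step \<Rightarrow> nat" where
  "entries_after x = (case x of Elev \<Rightarrow> 0 | Paste k \<Rightarrow> k)"

lemma valid_deco_steps_Nil [simp]: "valid_deco_steps []"
  by (simp add: valid_deco_steps_def)

lemma valid_deco_steps_snoc [simp]:
  "valid_deco_steps (s @ [x]) \<longleftrightarrow> valid_deco_steps s \<and> valid_deco_step (length s) x"
  by (auto simp: valid_deco_steps_def valid_deco_step_def nth_append less_Suc_eq)

lemma entries_after_le: "valid_deco_step l x \<Longrightarrow> entries_after x \<le> l"
  by (cases x) (simp_all add: valid_deco_step_def entries_after_def)

lemma entries_after_inj: "valid_deco_step l x \<Longrightarrow> valid_deco_step l y \<Longrightarrow> entries_after x = entries_after y \<Longrightarrow> x = y"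
  by (cases x; cases y) (simp_all add: valid_deco_step_def entries_after_def)

lemma perm_step_insert:
  "entries_after x \<le> length p \<Longrightarrow>
   perm_step p x = take (length p - entries_after x) p @ Suc (length p) # drop (length p - entries_after x) p"
  by (cases x) (simp_all add: entries_after_def)

lemma perm_of_steps_Nil [simp]: "perm_of_steps [] = []"
  by (simp add: perm_of_steps_def)

lemma perm_of_steps_snoc [simp]: "perm_of_steps (s @ [x]) = perm_step (perm_of_steps s) x"
  by (simp add: perm_of_steps_def)

lemma length_perm_step [simp]: "length (perm_step p x) = Suc (length p)"
  by (cases x) simp_all

lemma length_perm_of_steps [simp]: "length (perm_of_steps s) = length s"
  by (induction s rule: rev_induct) simp_all

lemma set_perm_step: "set (perm_step p x) = insert (Suc (length p)) (set p)"
proof (cases x)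
  case (Paste k)
  have "set p = set (take (length p - k) p) \<union> set (drop (length p - k) p)"
    by (metis set_append append_take_drop_id)
  then show ?thesis using Paste by auto
qed simp

lemma distinct_perm_step: "distinct p \<Longrightarrow> Suc (length p) \<notin> set p \<Longrightarrow> distinct (perm_step p x)"
proof (cases x)
  case (Paste k)
  assume "distinct p" "Suc (length p) \<notin> set p"
  moreover have "distinct (take (length p - k) p @ drop (length p - k) p)"
    using \<open>distinct p\<close> by simp
  ultimately show ?thesis using Paste
    by (auto simp del: append_take_drop_id dest: in_set_takeD in_set_dropD)
qed simp

lemma perm_of_steps_permutes:
  "distinct (perm_of_steps s) \<and> set (perm_of_steps s) = {1..length s}"
proof (induction s rule: rev_induct)
  case (snoc x s)
  then show ?case by (auto simp: distinct_perm_step set_perm_step)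
qed simp

lemma perm_of_steps_inj:
  "valid_deco_steps s \<Longrightarrow> valid_deco_steps s' \<Longrightarrow> perm_of_steps s = perm_of_steps s' \<Longrightarrow> s = s'"
proof (induction s arbitrary: s' rule: rev_induct)
  case Nil
  then show ?case by (metis length_0_conv length_perm_of_steps)
next
  case (snoc x s)
  obtain s'' y where s': "s' = s'' @ [y]"
    by (metis snoc.prems(3) length_perm_of_steps length_append_singleton length_Suc_conv_rev)
  let ?p = "perm_of_steps s" and ?q = "perm_of_steps s''" and ?l = "length s"
  have l: "length s'' = ?l"
    using snoc.prems(3) s' by (metis length_perm_of_steps length_append_singleton Suc_inject)
  have ok: "valid_deco_step ?l x" "valid_deco_step ?l y" "valid_deco_steps s" "valid_deco_steps s''"
    using snoc.prems(1,2) s' l by auto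
  have fresh: "Suc ?l \<notin> set (take (?l - entries_after x) ?p)" "Suc ?l \<notin> set (drop (?l - entries_after x) ?p)"
    using perm_of_steps_permutes[of s] by (auto dest: in_set_takeD in_set_dropD)
  have "take (?l - entries_after x) ?p @ Suc ?l # drop (?l - entries_after x) ?p
      = take (?l - entries_after y) ?q @ Suc ?l # drop (?l - entries_after y) ?q"
    using snoc.prems(3) s' l entries_after_le[OF ok(1)] entries_after_le[OF ok(2)]
    by (simp add: perm_step_insert)
  then have "take (?l - entries_after x) ?p = take (?l - entries_after y) ?q"
        and "drop (?l - entries_after x) ?p = drop (?l - entries_after y) ?q"
    using append_Cons_eq_iff[OF fresh] by auto
  then have "?p = ?q" and "entries_after x = entries_after y"
    using l entries_after_le[OF ok(1)] entries_after_le[OF ok(2)]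
    by (metis append_take_drop_id, metis length_drop length_perm_of_steps diff_diff_cancel)
  then show ?case
    using s' snoc.IH[OF ok(3,4)] entries_after_inj[OF ok(1,2)] by simp
qed

lemma perm_of_steps_surj:
  "distinct \<pi> \<Longrightarrow> set \<pi> = {1..n} \<Longrightarrow> \<exists>s. valid_deco_steps s \<and> perm_of_steps s = \<pi>"
proof (induction n arbitrary: \<pi>)
  case 0
  then show ?case by (intro exI[of _ "[]"]) simp
next
  case (Suc n)
  then have "Suc n \<in> set \<pi>" by simp
  then obtain A B where \<pi>: "\<pi> = A @ Suc n # B"
    by (meson split_list)
  have "distinct (A @ B)" "set (A @ B) = set \<pi> - {Suc n}"
    using Suc.prems(1) \<pi> by auto
  then have AB: "distinct (A @ B)" "set (A @ B) = {1..n}"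
    using Suc.prems(2) by auto
  then obtain s where s: "valid_deco_steps s" "perm_of_steps s = A @ B"
    using Suc.IH by blast
  have len: "length (A @ B) = length s" "length s = n"
    using s(2) AB(2) perm_of_steps_permutes[of s] by (metis length_perm_of_steps, metis card_atLeastAtMost diff_Suc_1)
  define x where "x = (if B = [] then Elev else Paste (length B))"
  have "valid_deco_step (length s) x" "perm_step (A @ B) x = \<pi>"
    using len \<pi> by (auto simp: x_def valid_deco_step_def Suc_le_eq)
  then show ?case using s by (intro exI[of _ "s @ [x]"]) simp
qed

lemma Phi4_perm_of_steps:
  assumes "valid_deco_steps s"
  shows "Phi4 (perm_of_steps s) = build_deco s"
proof -
  have "(THE s'. valid_deco_steps s' \<and> perm_of_steps s' = perm_of_steps s) = s"
    using assms perm_of_steps_inj by (intro the_equality) auto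
  then show ?thesis by (simp add: Phi4_def)
qed

lemma reindexed_321:
  assumes "avoids321 p" and "strict_mono_on I f"
    and "\<And>i. i \<in> I \<Longrightarrow> f i < length p \<and> p ! f i = q ! i"
    and "i \<in> I" "j \<in> I" "k \<in> I" "i < j" "j < k"
  shows "\<not> (q ! i > q ! j \<and> q ! j > q ! k)"
proof
  assume "q ! i > q ! j \<and> q ! j > q ! k"
  moreover have "f i < f j" "f j < f k"
    using assms(2,4-8) by (auto dest: strict_mono_onD)
  ultimately show False
    using assms(1,3-6) unfolding avoids321_def by metis
qed

lemma nth_insert_skip:
  "(A @ m # B) ! (if j < length A then j else Suc j) = (A @ B) ! j"
  by (auto simp: nth_append Suc_diff_le not_less)

lemma avoids321_delete:
  assumes "avoids321 (A @ m # B)"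
  shows "avoids321 (A @ B)"
  unfolding avoids321_def
proof clarify
  let ?f = "\<lambda>j. if j < length A then j else Suc j"
  fix i j k assume "i < j" "j < k" "k < length (A @ B)" "(A @ B) ! i > (A @ B) ! j" "(A @ B) ! j > (A @ B) ! k"
  moreover have "strict_mono_on {..<length (A @ B)} ?f"
    by (auto simp: strict_mono_on_def)
  moreover have "?f x < length (A @ m # B) \<and> (A @ m # B) ! ?f x = (A @ B) ! x"
    if "x \<in> {..<length (A @ B)}" for x
    using that by (auto simp: nth_insert_skip)
  ultimately show False
    using reindexed_321[OF assms, where q = "A @ B" and I = "{..<length (A @ B)}" and f = ?f] by auto
qed

lemma avoids321_insert_max:
  assumes max: "\<forall>x \<in> set A \<union> set B. x < m"
  shows "avoids321 (A @ m # B) \<longleftrightarrow> avoids321 (A @ B) \<and> sorted B"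
proof
  assume av: "avoids321 (A @ m # B)"
  have "sorted B"
    unfolding sorted_iff_nth_mono_less
  proof (intro allI impI)
    fix i j assume ij: "i < j" "j < length B"
    have "(A @ m # B) ! length A = m" "(A @ m # B) ! Suc (length A + i) = B ! i"
      "(A @ m # B) ! Suc (length A + j) = B ! j" by (simp_all add: nth_append)
    moreover have "B ! i < m" using max ij by auto
    ultimately show "B ! i \<le> B ! j"
      using av ij unfolding avoids321_def
      by (metis (no_types, lifting) add_Suc_right add_less_cancel_left length_Cons length_append
          less_add_Suc1 not_le Suc_less_eq)
  qed
  then show "avoids321 (A @ B) \<and> sorted B" using av avoids321_delete by blast
next
  assume av: "avoids321 (A @ B) \<and> sorted B"
  let ?p = "A @ m # B" and ?l = "length A"
  have below: "x \<noteq> ?l \<Longrightarrow> x < length ?p \<Longrightarrow> ?p ! x < m" for x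
    using max by (auto simp: nth_append nth_Cons' dest: nth_mem)
  show "avoids321 ?p"
    unfolding avoids321_def
  proof (clarify)
    fix a b c assume abc: "a < b" "b < c" "c < length ?p" "?p ! a > ?p ! b" "?p ! b > ?p ! c"
    have "b \<noteq> ?l" "c \<noteq> ?l"
      using abc below[of a] below[of b] by (auto simp: nth_append)
    show False
    proof (cases "a = ?l")
      case True
      then have "B ! (b - Suc ?l) > B ! (c - Suc ?l)" "b - Suc ?l < c - Suc ?l" "c - Suc ?l < length B"
        using abc by (auto simp: nth_append)
      then show False using av unfolding sorted_iff_nth_mono_less by (meson not_le)
    next
      case False
      let ?g = "\<lambda>x. if x < ?l then x else x - 1"
      have "strict_mono_on (- {?l}) ?g" by (auto simp: strict_mono_on_def)
      moreover have "?g x < length (A @ B) \<and> (A @ B) ! ?g x = ?p ! x" if "x \<in> - {?l}" "x < length ?p" for x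
        using that by (auto simp: nth_append nth_Cons' not_less)
      ultimately show False
        using reindexed_321[of "A @ B" "- {?l} \<inter> {..<length ?p}" ?g ?p a b c] av abc False \<open>b \<noteq> ?l\<close> \<open>c \<noteq> ?l\<close>
        by (auto simp: strict_mono_on_def)
    qed
  qed
qed

text \<open>A column (b, t) consists of the cells at heights b \<le> y < t; column lists run from left to
  right, and the source is the cell (0, 0) at the bottom of the first column.\<close>

type_synonym column = "nat \<times> nat"

fun col_step :: "column list \<Rightarrow> deco_step \<Rightarrow> column list" where
  "col_step [] Elev = [(0, 1)]"
| "col_step ((b, t) # cs) Elev = (0, Suc t) # map (map_prod Suc Suc) cs"
| "col_step cs (Paste k) = (0, k) # cs"

definition deco_columns :: "deco_step list \<Rightarrow> column list" where
  "deco_columns s = foldl col_step [] s"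

definition column_cells :: "column list \<Rightarrow> cell set" where
  "column_cells cs = {(int i, int j) | i j. i < length cs \<and> fst (cs ! i) \<le> j \<and> j < snd (cs ! i)}"

lemma deco_columns_snoc [simp]: "deco_columns (s @ [x]) = col_step (deco_columns s) x"
  by (simp add: deco_columns_def)

lemma deco_columns_Cons_0:
  assumes "s \<noteq> []"
  obtains t rest where "deco_columns s = (0, t) # rest"
proof -
  obtain s' x where "s = s' @ [x]" using assms rev_exhaust by blast
  then show ?thesis
    using that by (cases x; cases "deco_columns s'") auto
qed

lemma mem_shift_cells [simp]: "(x, y) \<in> shift_cells a b P \<longleftrightarrow> (x - a, y - b) \<in> P"
  unfolding shift_cells_def by force

lemma mem_column_cells:
  "(x, y) \<in> column_cells cs \<longleftrightarrow>
     0 \<le> x \<and> 0 \<le> y \<and> nat x < length cs \<and> fst (cs ! nat x) \<le> nat y \<and> nat y < snd (cs ! nat x)"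
  unfolding column_cells_def by (cases "0 \<le> x \<and> 0 \<le> y") (force, auto)

lemma mem_column_cells_index:
  "(x, y) \<in> column_cells cs \<longleftrightarrow> (\<exists>i < length cs. x = int i \<and> int (fst (cs ! i)) \<le> y \<and> y < int (snd (cs ! i)))"
proof
  assume "\<exists>i < length cs. x = int i \<and> int (fst (cs ! i)) \<le> y \<and> y < int (snd (cs ! i))"
  then obtain i where "i < length cs" "x = int i" "int (fst (cs ! i)) \<le> y" "y < int (snd (cs ! i))"
    by blast
  moreover have "y = int (nat y)" using calculation(3) by simp
  ultimately show "(x, y) \<in> column_cells cs"
    unfolding column_cells_def by (smt (verit) mem_Collect_eq of_nat_le_iff of_nat_less_iff)
qed (auto simp: column_cells_def)

lemma ex_int_eq: "(\<exists>j. y = int j \<and> P j) \<longleftrightarrow> 0 \<le> y \<and> P (nat y)"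
  by (cases "0 \<le> y") (force, auto)

lemma column_cells_Nil [simp]: "column_cells [] = {}"
  by (simp add: column_cells_def)

lemma column_cells_Cons:
  "column_cells ((b, t) # cs) = {(0, int j) | j. b \<le> j \<and> j < t} \<union> shift_cells 1 0 (column_cells cs)"
proof (rule set_eqI, clarify)
  fix x y :: int
  show "(x, y) \<in> column_cells ((b, t) # cs) \<longleftrightarrow> (x, y) \<in> {(0, int j) | j. b \<le> j \<and> j < t} \<union> shift_cells 1 0 (column_cells cs)"
    by (cases "x = 0") (auto simp: mem_column_cells ex_int_eq nat_diff_distrib' nth_Cons' le_nat_iff)
qed

lemma column_cells_raise:
  "column_cells (map (map_prod Suc Suc) cs) = shift_cells 0 1 (column_cells cs)"
  by (auto simp: mem_column_cells set_eq_iff nat_diff_distrib')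

lemma build_deco_eq_column_cells: "build_deco s = column_cells (deco_columns s)"
proof (induction s rule: rev_induct)
  case Nil
  then show ?case by (simp add: build_deco_def deco_columns_def)
next
  case (snoc x s)
  have step: "build_deco (s @ [x]) = apply_deco_step (build_deco s) x"
    by (simp add: build_deco_def)
  show ?case
  proof (cases x)
    case Elev
    show ?thesis
    proof (cases "s = []")
      case True
      then show ?thesis using Elev
        by (auto simp: build_deco_def deco_columns_def mem_column_cells set_eq_iff)
    next
      case False
      then obtain t rest where "deco_columns s = (0, t) # rest" by (rule deco_columns_Cons_0)
      then show ?thesis using Elev step snoc.IH
        by (auto simp: set_eq_iff column_cells_Cons column_cells_raise ex_int_eq nat_diff_distrib')
    qed
  next
    case (Paste k)
    then show ?thesis using step snoc.IH by (simp add: column_cells_Cons)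
  qed
qed

definition longest_sorted_suffix :: "nat list \<Rightarrow> nat \<Rightarrow> bool" where
  "longest_sorted_suffix p t \<longleftrightarrow>
     t \<le> length p \<and> sorted (drop (length p - t) p) \<and> (t < length p \<longrightarrow> \<not> sorted (drop (length p - Suc t) p))"

lemma sorted_drop_mono: "sorted (drop i xs) \<Longrightarrow> i \<le> j \<Longrightarrow> sorted (drop j xs)"
  using sorted_wrt_drop[of _ "drop i xs" "j - i"] by simp

lemma longest_sorted_suffix_iff:
  assumes lss: "longest_sorted_suffix p t" and "k \<le> length p"
  shows "sorted (drop (length p - k) p) \<longleftrightarrow> k \<le> t"
proof
  assume sorted: "sorted (drop (length p - k) p)"
  show "k \<le> t"
  proof (rule ccontr)
    assume "\<not> k \<le> t"
    then have "t < length p" "length p - k \<le> length p - Suc t" using assms(2) by auto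
    then show False
      using lss sorted_drop_mono[OF sorted] unfolding longest_sorted_suffix_def by blast
  qed
next
  assume "k \<le> t"
  then show "sorted (drop (length p - k) p)"
    using lss sorted_drop_mono[of "length p - t" p "length p - k"]
    unfolding longest_sorted_suffix_def by simp
qed

lemma longest_sorted_suffix_snoc_max:
  assumes "longest_sorted_suffix p t" "\<forall>x \<in> set p. x < m"
  shows "longest_sorted_suffix (p @ [m]) (Suc t)"
proof -
  have "\<forall>x \<in> set (drop i p). x \<le> m" for i
    using assms(2) by (meson in_set_dropD less_imp_le)
  then show ?thesis
    using assms(1) unfolding longest_sorted_suffix_def by (auto simp: sorted_append Suc_diff_le)
qed

lemma longest_sorted_suffix_insert_max:
  assumes "1 \<le> k" "k \<le> length p" "sorted (drop (length p - k) p)" "\<forall>x \<in> set p. x < m"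
  shows "longest_sorted_suffix (take (length p - k) p @ m # drop (length p - k) p) k"
proof -
  let ?B = "drop (length p - k) p"
  have "?B \<noteq> []" "\<forall>x \<in> set ?B. x < m"
    using assms by (auto dest: in_set_dropD)
  then have "\<not> sorted (m # ?B)"
    by (metis list.set_sel(1) not_le sorted_simps(2))
  then show ?thesis
    using assms unfolding longest_sorted_suffix_def by (simp add: min_def)
qed

fun stacked :: "column list \<Rightarrow> bool" where
  "stacked [] \<longleftrightarrow> True"
| "stacked [(b, t)] \<longleftrightarrow> b < t"
| "stacked ((b, t) # (b', t') # cs) \<longleftrightarrow> b < t \<and> b \<le> b' \<and> b' < t \<and> stacked ((b', t') # cs)"

lemma stacked_nth: "stacked cs \<Longrightarrow> i < length cs \<Longrightarrow> fst (cs ! i) < snd (cs ! i)"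
proof (induction cs arbitrary: i rule: stacked.induct)
  case (3 b t b' t' cs)
  then show ?case by (cases i) auto
qed auto

lemma stacked_raise: "stacked (map (map_prod Suc Suc) cs) \<longleftrightarrow> stacked cs"
  by (induction cs rule: stacked.induct) auto

lemma stacked_elevate: "stacked ((b, t) # cs) \<Longrightarrow> stacked ((0, Suc t) # map (map_prod Suc Suc) cs)"
  using stacked_raise[of cs] by (cases cs) auto

lemma stacked_deco_columns: "valid_deco_steps s \<Longrightarrow> stacked (deco_columns s)"
proof (induction s rule: rev_induct)
  case (snoc x s)
  then have IH: "stacked (deco_columns s)" and ok: "valid_deco_step (length s) x" by auto
  show ?case
  proof (cases x)
    case Elev
    then show ?thesis using IH stacked_elevate by (cases "deco_columns s") auto
  next
    case (Paste k)
    then have "s \<noteq> []" "1 \<le> k" using ok by (auto simp: valid_deco_step_def)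
    then obtain t rest where "deco_columns s = (0, t) # rest" using deco_columns_Cons_0 by blast
    then show ?thesis using IH Paste \<open>1 \<le> k\<close> by (cases rest) auto
  qed
qed (simp add: deco_columns_def)

lemma sorted_tops_raise:
  "sorted (map snd ((0, Suc t) # map (map_prod Suc Suc) cs)) \<longleftrightarrow> sorted (map snd ((b, t) # cs))"
  by (simp add: sorted_map)

lemma avoids321_iff_sorted_tops:
  assumes "valid_deco_steps s" "s \<noteq> []"
  shows "(avoids321 (perm_of_steps s) \<longleftrightarrow> sorted (map snd (deco_columns s)))
    \<and> (avoids321 (perm_of_steps s) \<longrightarrow> longest_sorted_suffix (perm_of_steps s) (snd (hd (deco_columns s))))"
  using assms
proof (induction s rule: rev_induct)
  case (snoc x s)
  have ok: "valid_deco_steps s" "valid_deco_step (length s) x" using snoc.prems(1) by auto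
  let ?p = "perm_of_steps s" and ?l = "length s"
  have below: "\<forall>y \<in> set ?p. y < Suc ?l"
    using perm_of_steps_permutes[of s] by auto
  show ?case
  proof (cases "s = []")
    case True
    then have "x = Elev" using ok(2) by (cases x) (auto simp: valid_deco_step_def)
    then show ?thesis
      using True by (simp add: deco_columns_def perm_of_steps_def avoids321_def longest_sorted_suffix_def)
  next
    case False
    obtain t rest where cols: "deco_columns s = (0, t) # rest"
      using deco_columns_Cons_0[OF False] by blast
    note IH = snoc.IH[OF ok(1) False, unfolded cols list.sel snd_conv]
    show ?thesis
    proof (cases x)
      case Elev
      have "avoids321 (?p @ [Suc ?l]) \<longleftrightarrow> avoids321 ?p"
        using avoids321_insert_max[of ?p "[]" "Suc ?l"] below by simp
      then show ?thesis
        using Elev cols IH sorted_tops_raise[of t rest 0] longest_sorted_suffix_snoc_max[OF _ below]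
        by auto
    next
      case (Paste k)
      let ?A = "take (?l - k) ?p" and ?B = "drop (?l - k) ?p"
      have k: "1 \<le> k" "k \<le> ?l" using ok(2) Paste by (auto simp: valid_deco_step_def)
      have av: "avoids321 (perm_of_steps (s @ [x])) \<longleftrightarrow> avoids321 ?p \<and> sorted ?B"
        using Paste avoids321_insert_max[of ?A ?B "Suc ?l"] below
        by (auto dest: in_set_takeD in_set_dropD)
      have "sorted ?B \<longleftrightarrow> k \<le> t" if "avoids321 ?p"
        using longest_sorted_suffix_iff[of ?p t k] IH that k by simp
      then have "avoids321 (perm_of_steps (s @ [x])) \<longleftrightarrow> sorted (map snd (deco_columns (s @ [x])))"
        using av IH Paste cols by auto
      moreover have "longest_sorted_suffix (perm_of_steps (s @ [x])) k" if "avoids321 ?p" "sorted ?B"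
        using longest_sorted_suffix_insert_max[of k ?p "Suc ?l"] that k below Paste by simp
      ultimately show ?thesis
        using av Paste cols by auto
    qed
  qed
qed simp

lemma path_verts_ne: "path_verts p ps \<noteq> []"
  by (induction p ps rule: path_verts.induct) auto

lemma path_verts_north:
  "path_verts (x, y) (replicate n StN @ ps) = map (\<lambda>j. (x, y + int j)) [0..<n] @ path_verts (x, y + int n) ps"
proof (induction n arbitrary: y)
  case (Suc n)
  then show ?case by (simp add: map_upt_Suc add.assoc del: upt_Suc)
qed simp

lemma set_path_verts_north:
  "set (path_verts (x, y) (replicate n StN @ ps)) = {(x, y + int j) | j. j < n} \<union> set (path_verts (x, y + int n) ps)"
  unfolding path_verts_north by auto

lemma last_path_verts_north:
  "last (path_verts (x, y) (replicate n StN @ ps)) = last (path_verts (x, y + int n) ps)"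
  unfolding path_verts_north using path_verts_ne by simp

lemma east_edges_north: "east_edges (x, y) (replicate n StN @ ps) = east_edges (x, y + int n) ps"
  by (induction n arbitrary: y) (auto simp: add.assoc)

lemma east_edges_ge: "(a, c) \<in> east_edges (x, y) ps \<Longrightarrow> x \<le> a \<and> y \<le> c"
  by (induction "(x, y)" ps arbitrary: x y rule: east_edges.induct) fastforce+

lemma east_edges_mono:
  "(x1, y1) \<in> east_edges p ps \<Longrightarrow> (x2, y2) \<in> east_edges p ps \<Longrightarrow> x1 \<le> x2 \<Longrightarrow> y1 \<le> y2"
proof (induction p ps rule: east_edges.induct)
  case (2 x y ps)
  then show ?case
    using east_edges_ge[of x1 y1 "x + 1" y ps] east_edges_ge[of x2 y2 "x + 1" y ps] by auto
qed auto

lemma parallelogram_imp_sorted_tops: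
  assumes par: "parallelogram_polyomino (column_cells cs)" and "stacked cs"
  shows "sorted (map snd cs)"
proof -
  obtain q U L where cells: "column_cells cs =
      {(i, j). \<exists>yl yu. (i, yl) \<in> east_edges q L \<and> (i, yu) \<in> east_edges q U \<and> yl \<le> j \<and> j < yu}"
    using par unfolding parallelogram_polyomino_def by blast
  have top_edge: "(int i, int (snd (cs ! i))) \<in> east_edges q U" if i: "i < length cs" for i
  proof -
    have "(int i, int (snd (cs ! i)) - 1) \<in> column_cells cs"
      using i stacked_nth[OF \<open>stacked cs\<close> i] by (auto simp: mem_column_cells nat_diff_distrib')
    then obtain yl yu where e: "(int i, yl) \<in> east_edges q L" "(int i, yu) \<in> east_edges q U"
      "yl \<le> int (snd (cs ! i)) - 1" "int (snd (cs ! i)) - 1 < yu"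
      using cells by auto
    then have "(int i, yu - 1) \<in> column_cells cs"
      unfolding cells using e(1,2) by (intro CollectI case_prodI exI[of _ yl] exI[of _ yu]) (use e in simp)
    then have "yu \<le> int (snd (cs ! i))"
      by (auto simp: mem_column_cells)
    then have "yu = int (snd (cs ! i))" using e(4) by linarith
    then show ?thesis using e(2) by simp
  qed
  show ?thesis
    unfolding sorted_iff_nth_mono
  proof (intro allI impI)
    fix i j assume "i \<le> j" "j < length (map snd cs)"
    then have "int (snd (cs ! i)) \<le> int (snd (cs ! j))"
      using east_edges_mono[OF top_edge[of i] top_edge[of j]] by simp
    then show "map snd cs ! i \<le> map snd cs ! j"
      using \<open>i \<le> j\<close> \<open>j < length (map snd cs)\<close> by simp
  qed
qed

fun lower_boundary :: "column list \<Rightarrow> lstep list" where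
  "lower_boundary [] = []"
| "lower_boundary [(b, t)] = StE # replicate (t - b) StN"
| "lower_boundary ((b, t) # (b', t') # cs) = StE # replicate (b' - b) StN @ lower_boundary ((b', t') # cs)"

text \<open>The upper boundary is traced from the top of the first column, so the full upper path of the
  polyomino first climbs that column.\<close>

fun upper_boundary :: "column list \<Rightarrow> lstep list" where
  "upper_boundary [] = []"
| "upper_boundary [(b, t)] = [StE]"
| "upper_boundary ((b, t) # (b', t') # cs) = StE # replicate (t' - t) StN @ upper_boundary ((b', t') # cs)"

lemmas north_run_simps =
  last_path_verts_north[where ps = "[]", simplified] set_path_verts_north[where ps = "[]", simplified]
  east_edges_north[where ps = "[]", simplified]

lemma last_lower_boundary:
  "stacked ((b, t) # cs) \<Longrightarrow>
   last (path_verts (x, int b) (lower_boundary ((b, t) # cs))) = (x + 1 + int (length cs), int (snd (last ((b, t) # cs))))"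
proof (induction cs arbitrary: x b t)
  case Nil
  then show ?case by (simp add: north_run_simps path_verts_ne)
next
  case (Cons c cs)
  obtain b' t' where "c = (b', t')" by fastforce
  with Cons show ?case
    by (auto simp: last_path_verts_north path_verts_ne algebra_simps)
qed

lemma last_upper_boundary:
  "sorted (map snd ((b, t) # cs)) \<Longrightarrow>
   last (path_verts (x, int t) (upper_boundary ((b, t) # cs))) = (x + 1 + int (length cs), int (snd (last ((b, t) # cs))))"
proof (induction cs arbitrary: x b t)
  case (Cons c cs)
  obtain b' t' where "c = (b', t')" by fastforce
  with Cons show ?case
    by (auto simp: last_path_verts_north path_verts_ne algebra_simps)
qed simp

lemma east_edges_lower_boundary:
  "stacked ((b, t) # cs) \<Longrightarrow>
   east_edges (x, int b) (lower_boundary ((b, t) # cs)) = (\<lambda>i. (x + int i, int (fst (((b, t) # cs) ! i)))) ` {..<length ((b, t) # cs)}"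
proof (induction cs arbitrary: x b t)
  case Nil
  then show ?case by (simp add: north_run_simps lessThan_Suc_eq_insert_0)
next
  case (Cons c cs)
  obtain b' t' where "c = (b', t')" by fastforce
  with Cons show ?case
    by (auto simp: east_edges_north lessThan_Suc_eq_insert_0 image_image algebra_simps simp del: lessThan_Suc)
qed

lemma east_edges_upper_boundary:
  "sorted (map snd ((b, t) # cs)) \<Longrightarrow>
   east_edges (x, int t) (upper_boundary ((b, t) # cs)) = (\<lambda>i. (x + int i, int (snd (((b, t) # cs) ! i)))) ` {..<length ((b, t) # cs)}"
proof (induction cs arbitrary: x b t)
  case (Cons c cs)
  obtain b' t' where "c = (b', t')" by fastforce
  with Cons show ?case
    by (auto simp: east_edges_north lessThan_Suc_eq_insert_0 image_image algebra_simps simp del: lessThan_Suc)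
qed (simp add: lessThan_Suc_eq_insert_0)

lemma start_in_path_verts: "p \<in> set (path_verts p ps)"
  by (induction p ps rule: path_verts.induct) auto

lemma path_verts_ge: "(a, c) \<in> set (path_verts (x, y) ps) \<Longrightarrow> x \<le> a \<and> y \<le> c"
  by (induction "(x, y)" ps arbitrary: x y rule: path_verts.induct) fastforce+

lemma path_verts_east_start:
  "(a, c) \<in> set (path_verts (x, y) (StE # ps)) \<Longrightarrow> x \<le> a \<and> y \<le> c \<and> (a = x \<longrightarrow> c = y)"
  using path_verts_ge[of a c "x + 1" y ps] by auto

lemma boundaries_start_east:
  "\<exists>ps. lower_boundary (col # cs) = StE # ps" "\<exists>ps. upper_boundary (col # cs) = StE # ps"
  by (cases col; cases cs; auto)+

lemma boundary_verts:
  "(a, y) \<in> set (path_verts (x, int b) (lower_boundary ((b, t) # cs))) \<Longrightarrow> x \<le> a \<and> int b \<le> y \<and> (a = x \<longrightarrow> y = int b)"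
  "(a, y) \<in> set (path_verts (x, int t) (upper_boundary ((b, t) # cs))) \<Longrightarrow> x \<le> a \<and> int t \<le> y"
  using boundaries_start_east[of "(b, t)" cs] path_verts_east_start by metis+

lemma set_lower_boundary_Cons_Cons:
  "b \<le> b' \<Longrightarrow> set (path_verts (x, int b) (lower_boundary ((b, t) # (b', t') # cs)))
    = insert (x, int b) ({(x + 1, int b + int j) | j. j < b' - b} \<union> set (path_verts (x + 1, int b') (lower_boundary ((b', t') # cs))))"
  by (simp add: set_path_verts_north)

lemma set_upper_boundary_Cons_Cons:
  "t \<le> t' \<Longrightarrow> set (path_verts (x, int t) (upper_boundary ((b, t) # (b', t') # cs)))
    = insert (x, int t) ({(x + 1, int t + int j) | j. j < t' - t} \<union> set (path_verts (x + 1, int t') (upper_boundary ((b', t') # cs))))"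
  by (simp add: set_path_verts_north)

lemma boundaries_meet_only_at_end:
  assumes "stacked ((b, t) # cs)" "sorted (map snd ((b, t) # cs))"
    and "(a, y) \<in> set (path_verts (x, int b) (lower_boundary ((b, t) # cs)))"
    and "(a, y) \<in> set (path_verts (x, int t) (upper_boundary ((b, t) # cs)))"
  shows "(a, y) = (x + 1 + int (length cs), int (snd (last ((b, t) # cs))))"
  using assms
proof (induction cs arbitrary: x b t)
  case Nil
  then show ?case by (auto simp: north_run_simps)
next
  case (Cons c cs)
  obtain b' t' where c: "c = (b', t')" by fastforce
  let ?L = "set (path_verts (x + 1, int b') (lower_boundary ((b', t') # cs)))"
  let ?U = "set (path_verts (x + 1, int t') (upper_boundary ((b', t') # cs)))"
  have h: "b < t" "b \<le> b'" "b' < t" "t \<le> t'" "stacked ((b', t') # cs)" "sorted (map snd ((b', t') # cs))"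
    using Cons.prems c by auto
  have in_U: "x + 1 \<le> a \<and> int t' \<le> y" if "(a, y) \<in> ?U"
    using boundary_verts(2)[OF that] .
  have upper: "(a, y) = (x, int t) \<or> (a = x + 1 \<and> int t \<le> y) \<or> (a, y) \<in> ?U"
    using Cons.prems(4) unfolding c set_upper_boundary_Cons_Cons[OF h(4)] by auto
  from Cons.prems(3) consider "(a, y) = (x, int b)" | "a = x + 1 \<and> y < int b'" | "(a, y) \<in> ?L"
    unfolding c set_lower_boundary_Cons_Cons[OF h(2)] by auto
  then show ?case
  proof cases
    case 1
    then show ?thesis using upper in_U h(1) by auto
  next
    case 2
    then show ?thesis using upper in_U h(3,4) by auto
  next
    case 3
    then have "x + 1 \<le> a" "a = x + 1 \<longrightarrow> y = int b'"
      using boundary_verts(1)[OF 3] by auto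
    then have "(a, y) \<in> ?U"
      using upper h by auto
    then show ?thesis
      using Cons.IH[OF h(5,6) 3] c by (simp add: algebra_simps)
  qed
qed

lemma boundaries_meet_at_end:
  assumes "stacked ((b, t) # cs)" "sorted (map snd ((b, t) # cs))"
  shows "set (path_verts (x, int b) (lower_boundary ((b, t) # cs))) \<inter> set (path_verts (x, int t) (upper_boundary ((b, t) # cs)))
    = {(x + 1 + int (length cs), int (snd (last ((b, t) # cs))))}"
    (is "?L \<inter> ?U = {?e}")
proof
  show "?L \<inter> ?U \<subseteq> {?e}"
  proof
    fix z assume z: "z \<in> ?L \<inter> ?U"
    obtain a y where "z = (a, y)" by fastforce
    then show "z \<in> {?e}"
      using z boundaries_meet_only_at_end[OF assms, of a y x] by simp
  qed
  have "?e \<in> ?L" "?e \<in> ?U"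
    using last_in_set[OF path_verts_ne] last_lower_boundary[OF assms(1)] last_upper_boundary[OF assms(2)]
    by metis+
  then show "{?e} \<subseteq> ?L \<inter> ?U" by simp
qed

lemma lower_boundary_meets_first_column:
  "set (path_verts (x, int b) (lower_boundary ((b, t) # cs))) \<inter> {(x, int b + int j) | j. j < n} \<subseteq> {(x, int b)}"
proof
  fix z assume "z \<in> set (path_verts (x, int b) (lower_boundary ((b, t) # cs))) \<inter> {(x, int b + int j) | j. j < n}"
  then obtain j where z: "z = (x, int b + int j)" "(x, int b + int j) \<in> set (path_verts (x, int b) (lower_boundary ((b, t) # cs)))"
    by blast
  from boundary_verts(1)[OF z(2)] have "j = 0" by simp
  then show "z \<in> {(x, int b)}" using z(1) by simp
qed

lemma sorted_tops_imp_parallelogram: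
  assumes "stacked cs" "sorted (map snd cs)" "cs \<noteq> []"
  shows "parallelogram_polyomino (column_cells cs)"
proof -
  obtain b t cs' where cs: "cs = (b, t) # cs'"
    using assms(3) by (cases cs) fastforce+
  have "b < t" using assms(1) cs by (cases cs') auto
  then have t: "int b + int (t - b) = int t" by simp
  define q where "q = (0 :: int, int b)"
  define U where "U = replicate (t - b) StN @ upper_boundary cs"
  define L where "L = lower_boundary cs"
  let ?e = "(1 + int (length cs'), int (snd (last cs)))"
  let ?seg = "{(0, int b + int j) | j. j < t - b}"
  have last_eq: "last (path_verts q U) = ?e" "last (path_verts q L) = ?e"
    using last_lower_boundary[of b t cs' 0, folded cs] last_upper_boundary[of b t cs' 0, folded cs] assms
    unfolding q_def U_def L_def by (simp_all add: last_path_verts_north t)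
  have "set (path_verts q U) = ?seg \<union> set (path_verts (0, int t) (upper_boundary cs))"
    unfolding q_def U_def by (simp add: set_path_verts_north t)
  moreover have "set (path_verts q L) \<inter> set (path_verts (0, int t) (upper_boundary cs)) = {?e}"
    using boundaries_meet_at_end[of b t cs' 0, folded cs] assms unfolding q_def L_def by simp
  moreover have "set (path_verts q L) \<inter> ?seg \<subseteq> {q}"
    using lower_boundary_meets_first_column[of 0 b t cs', folded cs] unfolding q_def L_def .
  moreover have "q \<in> set (path_verts q L) \<inter> ?seg"
    using start_in_path_verts[of q L] \<open>b < t\<close> unfolding q_def by force
  ultimately have meet: "set (path_verts q U) \<inter> set (path_verts q L) = {q, last (path_verts q U)}"
    using last_eq by auto
  have edges: "east_edges q L = (\<lambda>i. (int i, int (fst (cs ! i)))) ` {..<length cs}"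
    "east_edges q U = (\<lambda>i. (int i, int (snd (cs ! i)))) ` {..<length cs}"
    using east_edges_lower_boundary[of b t cs' 0, folded cs] east_edges_upper_boundary[of b t cs' 0, folded cs] assms
    unfolding q_def U_def L_def by (simp_all add: east_edges_north t)
  have "column_cells cs = {(i, j). \<exists>yl yu. (i, yl) \<in> east_edges q L \<and> (i, yu) \<in> east_edges q U \<and> yl \<le> j \<and> j < yu}"
    unfolding edges by (auto simp: set_eq_iff mem_column_cells_index)
  then show ?thesis
    unfolding parallelogram_polyomino_def using last_eq meet by (intro exI[of _ q] exI[of _ U] exI[of _ L]) simp
qed

lemma parallelogram_iff_sorted_tops:
  assumes "stacked cs" "cs \<noteq> []"
  shows "parallelogram_polyomino (column_cells cs) \<longleftrightarrow> sorted (map snd cs)"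
  using assms parallelogram_imp_sorted_tops sorted_tops_imp_parallelogram by blast

theorem mainTheorem3:
  fixes n :: nat and \<pi> :: "nat list"
  assumes "n \<ge> 1" and "distinct \<pi>" and "set \<pi> = {1..n}"
  shows "avoids321 \<pi> \<longleftrightarrow> parallelogram_polyomino (Phi4 \<pi>)"
proof -
  obtain s where s: "valid_deco_steps s" "perm_of_steps s = \<pi>"
    using perm_of_steps_surj[OF assms(2,3)] by blast
  have "length s = n"
    using s(2) assms(2,3) distinct_card[of \<pi>] by (metis card_atLeastAtMost diff_Suc_1 length_perm_of_steps)
  then have "s \<noteq> []" using assms(1) by auto
  then have "deco_columns s \<noteq> []" by (metis deco_columns_Cons_0 list.distinct(1))
  have "Phi4 \<pi> = column_cells (deco_columns s)"
    using Phi4_perm_of_steps[OF s(1)] s(2) build_deco_eq_column_cells by simp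
  then show ?thesis
    using avoids321_iff_sorted_tops[OF s(1) \<open>s \<noteq> []\<close>] s(2)
      parallelogram_iff_sorted_tops[OF stacked_deco_columns[OF s(1)] \<open>deco_columns s \<noteq> []\<close>]
    by simp
qed

end
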